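(* Let $p,q\in(0,\infty]$ with $\min\{p,q\}<\infty$. Then the embedding operator $I\colon\ell^{p,q}\to c_0$ is maximally non-compact, i.e. $\alpha(I)=\|I\|$.
   Context: For a scalar sequence $a=(a_n)$, its decreasing rearrangement is $a^*_n=\inf\{\omega>0:\#\{k:|a_k|>\omega\}\le n-1\}$. For $p,q\in(0,\infty]$, the Lorentz sequence space $\ell^{p,q}$ consists of all sequences $a$ with $\|a\|_{p,q}<\infty$, where $\|a\|_{p,q}=\big(\sum_{n=1}^\infty (a_n^* )^q n^{q/p-1}\big)^{1/q}$ if $q<\infty$, and $\|a\|_{p,\infty}=\sup_{n}n^{1/p}a_n^*$; convention $1/\infty=0$. $c_0$ is the space of sequences converging to $0$ with the sup norm. For a bounded map $T\colon X\to Y$ with closed unit balls $B_X,B_Y$, the ball measure of non-compactness is $\alpha(T)=\inf\{r>0:\ T(B_X)\subset\bigcup_{i=1}^m (y_i+rB_Y)\text{ for some } m\in\mathbb{N},\ y_i\in Y\}$, $\|T\|=\sup_{x\in B_X}\|Tx\|$, and $T$ is maximally non-compact if $\alpha(T)=\|T\|$. *)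

theory Defs
  imports "HOL-Analysis.Analysis"
begin

text \<open>Scalar sequences are real sequences indexed from 0; the paper's index n \<ge> 1
  corresponds to position n - 1. Exponents p, q range over (0, \<infinity>] as ennreal.\<close>

text \<open>Positive power of an extended nonnegative real (only used with exponent r > 0).\<close>
definition epow :: "ennreal \<Rightarrow> real \<Rightarrow> ennreal" where
  "epow x r = (if x = \<infinity> then (if r > 0 then \<infinity> else if r = 0 then 1 else 0)
               else ennreal (enn2real x powr r))"

definition einv :: "ennreal \<Rightarrow> real" where
  "einv p = (if p = \<infinity> then 0 else 1 / enn2real p)"

text \<open>Decreasing rearrangement a*_n for n \<ge> 1 (value in [0,\<infinity>]; inf of the empty set is \<infinity>).
  #{k. |a_k| > w} \<le> n-1 requires in particular that this set is finite.\<close>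
definition drear :: "(nat \<Rightarrow> real) \<Rightarrow> nat \<Rightarrow> ennreal" where
  "drear a n = Inf {w::ennreal. w > 0 \<and> finite {k. ennreal \<bar>a k\<bar> > w}
                    \<and> card {k. ennreal \<bar>a k\<bar> > w} \<le> n - 1}"

definition lorentz_norm :: "ennreal \<Rightarrow> ennreal \<Rightarrow> (nat \<Rightarrow> real) \<Rightarrow> ennreal" where
  "lorentz_norm p q a =
     (if q = \<infinity> then (SUP n\<in>{1::nat..}. ennreal (real n powr einv p) * drear a n)
      else epow (\<Sum>n. epow (drear a (Suc n)) (enn2real q)
                        * ennreal (real (Suc n) powr (enn2real q * einv p - 1)))
                (1 / enn2real q))"

definition lorentz_space :: "ennreal \<Rightarrow> ennreal \<Rightarrow> (nat \<Rightarrow> real) set" where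
  "lorentz_space p q = {a. lorentz_norm p q a < \<infinity>}"

definition lorentz_ball :: "ennreal \<Rightarrow> ennreal \<Rightarrow> (nat \<Rightarrow> real) set" where
  "lorentz_ball p q = {a. lorentz_norm p q a \<le> 1}"

definition c0 :: "(nat \<Rightarrow> real) set" where
  "c0 = {a. a \<longlonglongrightarrow> 0}"

definition sup_norm :: "(nat \<Rightarrow> real) \<Rightarrow> ennreal" where
  "sup_norm a = (SUP n. ennreal \<bar>a n\<bar>)"

text \<open>Operator norm of a map T from the unit ball BX into c0 (sup norm).\<close>
definition op_norm :: "(nat \<Rightarrow> real) set \<Rightarrow> ((nat \<Rightarrow> real) \<Rightarrow> (nat \<Rightarrow> real)) \<Rightarrow> ennreal" where
  "op_norm BX T = (SUP x\<in>BX. sup_norm (T x))"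

text \<open>Ball measure of non-compactness of T with domain unit ball BX, target c0.\<close>
definition ball_mnc :: "(nat \<Rightarrow> real) set \<Rightarrow> ((nat \<Rightarrow> real) \<Rightarrow> (nat \<Rightarrow> real)) \<Rightarrow> ennreal" where
  "ball_mnc BX T = Inf {ennreal r | r. r > 0 \<and>
     (\<exists>Y. finite Y \<and> Y \<noteq> {} \<and> Y \<subseteq> c0 \<and>
        T ` BX \<subseteq> (\<Union>y\<in>Y. {(\<lambda>n. y n + z n) | z. z \<in> c0 \<and> sup_norm z \<le> ennreal r}))}"

end

theory Submission
  imports Defs
begin

text \<open>
  Every coordinate satisfies \<open>|a k| \<le> a*(1)\<close>, and \<open>a*(1)\<close> is the first term of the Lorentz
  quasi-norm, so the unit ball of \<open>\<ell>(p,q)\<close> lies in the unit ball of the sup norm. It also lies in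
  \<open>c\<^sub>0\<close>: a sequence not tending to 0 has \<open>a*(n) \<ge> \<epsilon> > 0\<close> for all \<open>n\<close>, which makes its quasi-norm
  infinite, through \<open>n powr (1/p) \<rightarrow> \<infinity>\<close> if \<open>q = \<infinity>\<close> and through the harmonic series if
  \<open>q < \<infinity>\<close>. The unit vectors \<open>e k\<close> lie in the ball, so \<open>\<parallel>I\<parallel> = 1\<close>. Finitely many centres in
  \<open>c\<^sub>0\<close> are all smaller than \<open>1 - r\<close> at some coordinate \<open>k\<close>, so no balls of radius \<open>r < 1\<close>
  around them cover \<open>e k\<close>; hence \<open>\<alpha>(I) = 1\<close> as well.
\<close>

lemma epow_mono: "r > 0 \<Longrightarrow> x \<le> y \<Longrightarrow> epow x r \<le> epow y r"
  unfolding epow_def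
  by (cases "y = \<infinity>")
     (auto intro!: ennreal_leI powr_mono2 enn2real_mono simp: top.extremum_unique less_top)

lemma epow_epow_inverse: "r > 0 \<Longrightarrow> epow (epow x r) (1 / r) = x"
  by (cases "x = \<infinity>") (simp_all add: epow_def powr_powr ennreal_enn2real_if)

lemma epow_zero: "r > 0 \<Longrightarrow> epow 0 r = 0"
  by (simp add: epow_def)

lemma epow_one: "epow 1 r = 1"
  by (simp add: epow_def)

lemma epow_top: "r > 0 \<Longrightarrow> epow \<infinity> r = \<infinity>"
  by (simp add: epow_def)

lemma enn2real_positive_if_finite: "q > 0 \<Longrightarrow> q \<noteq> \<infinity> \<Longrightarrow> enn2real q > 0"
  by (simp add: enn2real_positive_iff less_top)

lemma lorentz_norm_finite_exponent:
  "q \<noteq> \<infinity> \<Longrightarrow> lorentz_norm p q a =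
     epow (\<Sum>n. epow (drear a (Suc n)) (enn2real q)
                * ennreal (real (Suc n) powr (enn2real q * einv p - 1))) (1 / enn2real q)"
  by (simp add: lorentz_norm_def)

lemma sup_norm_le_drear_1: "sup_norm a \<le> drear a 1"
  unfolding drear_def sup_norm_def
proof (rule Inf_greatest)
  fix w
  assume "w \<in> {w. w > 0 \<and> finite {k. ennreal \<bar>a k\<bar> > w} \<and> card {k. ennreal \<bar>a k\<bar> > w} \<le> 1 - 1}"
  then have "{k. ennreal \<bar>a k\<bar> > w} = {}" by auto
  then show "(SUP n. ennreal \<bar>a n\<bar>) \<le> w" by (auto intro!: SUP_least simp: not_less)
qed

lemma drear_1_le_lorentz_norm:
  assumes "q > 0"
  shows "drear a 1 \<le> lorentz_norm p q a"
proof (cases "q = \<infinity>")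
  case True
  have "ennreal (real 1 powr einv p) * drear a 1
          \<le> (SUP n\<in>{1::nat..}. ennreal (real n powr einv p) * drear a n)"
    by (rule SUP_upper) auto
  then show ?thesis using True by (simp add: lorentz_norm_def)
next
  case False
  define r where "r = enn2real q"
  have r: "r > 0" using assms False by (simp add: r_def enn2real_positive_if_finite)
  let ?f = "\<lambda>n. epow (drear a (Suc n)) r * ennreal (real (Suc n) powr (r * einv p - 1))"
  have "epow (drear a 1) r \<le> (\<Sum>n. ?f n)"
    using sum_le_suminf[OF summableI, of "{0}" ?f] by simp
  then have "epow (epow (drear a 1) r) (1 / r) \<le> epow (\<Sum>n. ?f n) (1 / r)"
    using r by (intro epow_mono) auto
  then show ?thesis using False r by (simp add: lorentz_norm_finite_exponent epow_epow_inverse r_def)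
qed

lemma sup_norm_le_lorentz_norm: "q > 0 \<Longrightarrow> sup_norm a \<le> lorentz_norm p q a"
  using sup_norm_le_drear_1 drear_1_le_lorentz_norm order_trans by blast

lemma ennreal_le_drear_if_infinite:
  assumes "infinite {k. e \<le> \<bar>a k\<bar>}"
  shows "ennreal e \<le> drear a n"
  unfolding drear_def
proof (rule Inf_greatest)
  fix w
  assume w: "w \<in> {w. w > 0 \<and> finite {k. ennreal \<bar>a k\<bar> > w} \<and> card {k. ennreal \<bar>a k\<bar> > w} \<le> n - 1}"
  show "ennreal e \<le> w"
  proof (rule ccontr)
    assume "\<not> ennreal e \<le> w"
    then have "w < ennreal e" by simp
    then have "{k. e \<le> \<bar>a k\<bar>} \<subseteq> {k. ennreal \<bar>a k\<bar> > w}"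
      using ennreal_leI order.strict_trans2 by blast
    then show False using w assms finite_subset by auto
  qed
qed

lemma lorentz_norm_weak_eq_top:
  assumes "p > 0" "p \<noteq> \<infinity>" "e > 0" and infinite: "infinite {k. e \<le> \<bar>a k\<bar>}"
  shows "lorentz_norm p \<infinity> a = \<infinity>"
proof (rule ccontr)
  define s where "s = einv p"
  have s: "s > 0" using assms by (simp add: s_def einv_def enn2real_positive_if_finite)
  assume "lorentz_norm p \<infinity> a \<noteq> \<infinity>"
  then obtain B where B: "lorentz_norm p \<infinity> a = ennreal B" "B \<ge> 0"
    by (cases "lorentz_norm p \<infinity> a" rule: ennreal_cases) auto
  have bounded: "real n powr s * e \<le> B" if "n \<ge> 1" for n :: nat
  proof -
    have "ennreal (real n powr s) * ennreal e \<le> ennreal (real n powr s) * drear a n"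
      using ennreal_le_drear_if_infinite[OF infinite] by (intro mult_left_mono) auto
    also have "\<dots> \<le> (SUP n\<in>{1..}. ennreal (real n powr s) * drear a n)"
      using that by (intro SUP_upper) simp
    also have "\<dots> = lorentz_norm p \<infinity> a"
      by (simp add: lorentz_norm_def s_def)
    finally show ?thesis using B \<open>e > 0\<close> by (simp add: ennreal_mult''[symmetric])
  qed
  have "filterlim (\<lambda>n. real n powr s) at_top sequentially"
    by (rule filterlim_compose[OF real_powr_at_top[OF s] filterlim_real_sequentially])
  then have "eventually (\<lambda>n. real n powr s > B / e \<and> n \<ge> 1) sequentially"
    by (auto simp: filterlim_at_top_dense intro: eventually_conj eventually_ge_at_top)
  then obtain n :: nat where "real n powr s > B / e" "n \<ge> 1"
    by (auto simp: eventually_sequentially)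
  then show False using bounded[of n] \<open>e > 0\<close> by (simp add: field_simps)
qed

text \<open>The weight \<open>n powr (q/p - 1)\<close> is at least \<open>1/n\<close>, whence the comparison with the harmonic series.\<close>
lemma lorentz_norm_eq_top:
  assumes "q > 0" "q \<noteq> \<infinity>" "e > 0" and infinite: "infinite {k. e \<le> \<bar>a k\<bar>}"
  shows "lorentz_norm p q a = \<infinity>"
proof -
  define r where "r = enn2real q"
  have r: "r > 0" using assms by (simp add: r_def enn2real_positive_if_finite)
  define c where "c = e powr r"
  have c: "c > 0" using \<open>e > 0\<close> by (simp add: c_def)
  let ?f = "\<lambda>n. epow (drear a (Suc n)) r * ennreal (real (Suc n) powr (r * einv p - 1))"
  have harmonic_le: "ennreal (c * inverse (real (Suc n))) \<le> ?f n" for n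
  proof -
    have "ennreal c = epow (ennreal e) r" using \<open>e > 0\<close> by (simp add: c_def epow_def)
    also have "\<dots> \<le> epow (drear a (Suc n)) r"
      using r ennreal_le_drear_if_infinite[OF infinite] by (intro epow_mono)
    finally have "ennreal c \<le> epow (drear a (Suc n)) r" .
    moreover have "real (Suc n) powr (-1) \<le> real (Suc n) powr (r * einv p - 1)"
      using r by (intro powr_mono) (auto simp: einv_def)
    then have "inverse (real (Suc n)) \<le> real (Suc n) powr (r * einv p - 1)"
      by (simp add: powr_minus)
    ultimately have "ennreal c * ennreal (inverse (real (Suc n))) \<le> ?f n"
      by (intro mult_mono) (auto intro: ennreal_leI)
    then show ?thesis
      using c by (simp add: ennreal_mult)
  qed
  have "\<not> summable (\<lambda>n. c * inverse (real (Suc n)))"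
    using not_summable_harmonic[where 'a=real] summable_Suc_iff[of "\<lambda>n. inverse (real n)"] c
    by (simp add: summable_cmult_iff)
  then have "(\<Sum>n. ennreal (c * inverse (real (Suc n)))) = \<infinity>"
    using c summable_suminf_not_top[of "\<lambda>n. c * inverse (real (Suc n))"] by fastforce
  moreover have "(\<Sum>n. ennreal (c * inverse (real (Suc n)))) \<le> (\<Sum>n. ?f n)"
    by (intro suminf_le[OF _ summableI summableI] harmonic_le)
  ultimately have "(\<Sum>n. ?f n) = \<infinity>" by (simp add: top_unique)
  then show ?thesis
    using assms(2) r epow_top[of "1 / r"] by (simp add: lorentz_norm_finite_exponent r_def)
qed

lemma LIMSEQ_zero_if_lorentz_norm_finite:
  assumes "p > 0" "q > 0" "p \<noteq> \<infinity> \<or> q \<noteq> \<infinity>" and finite: "lorentz_norm p q a < \<infinity>"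
  shows "a \<longlonglongrightarrow> 0"
proof (rule ccontr)
  assume "\<not> a \<longlonglongrightarrow> 0"
  then obtain e where "e > 0" and "\<forall>N. \<exists>n\<ge>N. e \<le> \<bar>a n\<bar>"
    unfolding LIMSEQ_iff by (auto simp: not_less)
  then have "infinite {k. e \<le> \<bar>a k\<bar>}"
    by (simp add: infinite_nat_iff_unbounded_le)
  then have "lorentz_norm p q a = \<infinity>"
    using assms lorentz_norm_weak_eq_top lorentz_norm_eq_top \<open>e > 0\<close> by (cases "q = \<infinity>") auto
  with finite show False by simp
qed

lemma lorentz_ball_subset_c0:
  assumes "p > 0" "q > 0" "p \<noteq> \<infinity> \<or> q \<noteq> \<infinity>"
  shows "lorentz_ball p q \<subseteq> c0"
proof
  fix a
  assume "a \<in> lorentz_ball p q"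
  then have "lorentz_norm p q a \<le> 1"
    by (simp add: lorentz_ball_def)
  then have "lorentz_norm p q a < \<infinity>"
    using ennreal_one_less_top unfolding infinity_ennreal_def by (rule le_less_trans)
  then show "a \<in> c0"
    using LIMSEQ_zero_if_lorentz_norm_finite[OF assms] by (simp add: c0_def)
qed

definition unit_vector :: "nat \<Rightarrow> nat \<Rightarrow> real" where
  "unit_vector k = (\<lambda>n. if n = k then 1 else 0)"

lemma sup_norm_unit_vector: "sup_norm (unit_vector k) = 1"
  unfolding sup_norm_def
proof (rule antisym)
  show "(SUP n. ennreal \<bar>unit_vector k n\<bar>) \<le> 1"
    by (rule SUP_least) (simp add: unit_vector_def)
  show "1 \<le> (SUP n. ennreal \<bar>unit_vector k n\<bar>)"
    by (rule SUP_upper2[of k]) (simp_all add: unit_vector_def)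
qed

lemma drear_unit_vector_1: "drear (unit_vector k) 1 \<le> 1"
  unfolding drear_def by (rule Inf_lower) (auto simp: unit_vector_def)

lemma drear_unit_vector_eq_0:
  assumes "n \<ge> 2"
  shows "drear (unit_vector k) n = 0"
proof -
  have "w \<in> {w. w > 0 \<and> finite {j. ennreal \<bar>unit_vector k j\<bar> > w}
                \<and> card {j. ennreal \<bar>unit_vector k j\<bar> > w} \<le> n - 1}" if "w > 0" for w :: ennreal
  proof -
    have support: "{j. ennreal \<bar>unit_vector k j\<bar> > w} \<subseteq> {k}"
      using that by (auto simp: unit_vector_def)
    then have "card {j. ennreal \<bar>unit_vector k j\<bar> > w} \<le> 1"
      using card_mono[of "{k}"] by simp
    then show ?thesis
      using that assms finite_subset[OF support] by simp
  qed
  then have "{0<..} \<subseteq> {w. w > 0 \<and> finite {j. ennreal \<bar>unit_vector k j\<bar> > w}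
                \<and> card {j. ennreal \<bar>unit_vector k j\<bar> > w} \<le> n - 1}"
    by auto
  then have "drear (unit_vector k) n \<le> Inf ({0<..} :: ennreal set)"
    unfolding drear_def by (rule Inf_superset_mono)
  then show ?thesis by simp
qed

lemma lorentz_norm_unit_vector_le_1:
  assumes "q > 0"
  shows "lorentz_norm p q (unit_vector k) \<le> 1"
proof (cases "q = \<infinity>")
  case True
  have "ennreal (real n powr einv p) * drear (unit_vector k) n \<le> 1" if "n \<ge> 1" for n :: nat
    using that drear_unit_vector_1 drear_unit_vector_eq_0[of n]
    by (cases "n = 1") auto
  then show ?thesis using True by (auto simp: lorentz_norm_def intro!: SUP_least)
next
  case False
  define r where "r = enn2real q"
  have r: "r > 0" using assms False by (simp add: r_def enn2real_positive_if_finite)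
  let ?f = "\<lambda>n. epow (drear (unit_vector k) (Suc n)) r * ennreal (real (Suc n) powr (r * einv p - 1))"
  have "?f n = 0" if "n \<noteq> 0" for n
  proof -
    have "drear (unit_vector k) (Suc n) = 0"
      using that by (intro drear_unit_vector_eq_0) simp
    then show ?thesis using r by (simp add: epow_zero)
  qed
  then have "(\<Sum>n. ?f n) = sum ?f {0}"
    by (intro suminf_finite) auto
  also have "\<dots> \<le> 1"
    using epow_mono[OF r drear_unit_vector_1] by (simp add: epow_one)
  finally have "epow (\<Sum>n. ?f n) (1 / r) \<le> epow 1 (1 / r)"
    using r by (intro epow_mono) auto
  then show ?thesis using False by (simp add: lorentz_norm_finite_exponent epow_one r_def)
qed

lemma op_norm_eq_1:
  assumes "\<And>x. x \<in> BX \<Longrightarrow> sup_norm (T x) \<le> 1" and "unit_vector k \<in> T ` BX"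
  shows "op_norm BX T = 1"
  unfolding op_norm_def
proof (rule antisym)
  show "(SUP x\<in>BX. sup_norm (T x)) \<le> 1"
    using assms(1) by (rule SUP_least)
  obtain x where "x \<in> BX" and "T x = unit_vector k"
    using assms(2) by (auto simp: image_iff)
  then have "sup_norm (unit_vector k) \<le> (SUP x\<in>BX. sup_norm (T x))"
    by (metis SUP_upper)
  then show "1 \<le> (SUP x\<in>BX. sup_norm (T x))"
    by (simp only: sup_norm_unit_vector)
qed

lemma ball_mnc_le:
  assumes "r > 0" and "\<And>x. x \<in> BX \<Longrightarrow> T x \<in> c0 \<and> sup_norm (T x) \<le> ennreal r"
  shows "ball_mnc BX T \<le> ennreal r"
  unfolding ball_mnc_def
proof (rule Inf_lower, intro CollectI exI[of _ r] conjI refl assms(1) exI[of _ "{\<lambda>n. 0}"])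
  let ?zero = "\<lambda>n. 0 :: real"
  show "finite {?zero}" "{?zero} \<noteq> {}" by simp_all
  show "{?zero} \<subseteq> c0" by (simp add: c0_def)
  show "T ` BX \<subseteq> (\<Union>y\<in>{?zero}. {(\<lambda>n. y n + z n) | z. z \<in> c0 \<and> sup_norm z \<le> ennreal r})"
  proof
    fix v
    assume "v \<in> T ` BX"
    then obtain x where "x \<in> BX" and "v = T x"
      by (auto simp: image_iff)
    then have "v \<in> c0 \<and> sup_norm v \<le> ennreal r"
      using assms(2) by simp
    then show "v \<in> (\<Union>y\<in>{?zero}. {(\<lambda>n. y n + z n) | z. z \<in> c0 \<and> sup_norm z \<le> ennreal r})"
      by simp
  qed
qed

lemma one_le_ball_mnc:
  assumes unit_vectors: "\<And>k. unit_vector k \<in> T ` BX"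
  shows "1 \<le> ball_mnc BX T"
  unfolding ball_mnc_def
proof (rule Inf_greatest, clarify)
  fix r :: real and Y
  assume "r > 0" "finite Y" "Y \<subseteq> c0"
    and cover: "T ` BX \<subseteq> (\<Union>y\<in>Y. {(\<lambda>n. y n + z n) | z. z \<in> c0 \<and> sup_norm z \<le> ennreal r})"
  show "1 \<le> ennreal r"
  proof (rule ccontr)
    assume "\<not> 1 \<le> ennreal r"
    then have "r < 1" by (simp add: not_le ennreal_less_iff)
    have "\<forall>y\<in>Y. eventually (\<lambda>k. \<bar>y k\<bar> < 1 - r) sequentially"
    proof
      fix y
      assume "y \<in> Y"
      then have "y \<longlonglongrightarrow> 0" using \<open>Y \<subseteq> c0\<close> by (auto simp: c0_def)
      then have "(\<lambda>k. \<bar>y k\<bar>) \<longlonglongrightarrow> 0" by (rule tendsto_rabs_zero)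
      moreover have "0 < 1 - r" using \<open>r < 1\<close> by simp
      ultimately show "eventually (\<lambda>k. \<bar>y k\<bar> < 1 - r) sequentially"
        by (rule order_tendstoD(2))
    qed
    then have "eventually (\<lambda>k. \<forall>y\<in>Y. \<bar>y k\<bar> < 1 - r) sequentially"
      using \<open>finite Y\<close> by (simp add: eventually_ball_finite)
    then obtain k where small: "\<forall>y\<in>Y. \<bar>y k\<bar> < 1 - r"
      by (auto simp: eventually_sequentially)
    have "unit_vector k \<in> (\<Union>y\<in>Y. {(\<lambda>n. y n + z n) | z. z \<in> c0 \<and> sup_norm z \<le> ennreal r})"
      using cover unit_vectors[of k] by (rule subsetD)
    then obtain y where "y \<in> Y"
      and "unit_vector k \<in> {(\<lambda>n. y n + z n) | z. z \<in> c0 \<and> sup_norm z \<le> ennreal r}"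
      by (rule UN_E)
    then obtain z where "sup_norm z \<le> ennreal r" and decomp: "unit_vector k = (\<lambda>n. y n + z n)"
      by blast
    have "ennreal \<bar>z k\<bar> \<le> sup_norm z"
      unfolding sup_norm_def by (rule SUP_upper) simp
    then have "ennreal \<bar>z k\<bar> \<le> ennreal r"
      using \<open>sup_norm z \<le> ennreal r\<close> by (rule order_trans)
    then have "\<bar>z k\<bar> \<le> r" using \<open>r > 0\<close> by (simp add: ennreal_le_iff)
    moreover have "1 = y k + z k" using fun_cong[OF decomp, of k] by (simp add: unit_vector_def)
    ultimately show False using small \<open>y \<in> Y\<close> by auto
  qed
qed

theorem mainTheorem11:
  fixes p q :: ennreal
  assumes "p > 0" and "q > 0" and "p \<noteq> \<infinity> \<or> q \<noteq> \<infinity>"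
  shows "lorentz_space p q \<subseteq> c0
         \<and> op_norm (lorentz_ball p q) id < \<infinity>
         \<and> ball_mnc (lorentz_ball p q) id = op_norm (lorentz_ball p q) id"
proof -
  have space: "lorentz_space p q \<subseteq> c0"
    using LIMSEQ_zero_if_lorentz_norm_finite[OF assms] by (auto simp: lorentz_space_def c0_def)
  have in_unit_ball: "x \<in> c0 \<and> sup_norm x \<le> ennreal 1" if "x \<in> lorentz_ball p q" for x
    using that lorentz_ball_subset_c0[OF assms] sup_norm_le_lorentz_norm[OF assms(2), of x p]
    by (auto simp: lorentz_ball_def)
  have unit_vectors: "unit_vector k \<in> id ` lorentz_ball p q" for k
    using lorentz_norm_unit_vector_le_1[OF assms(2)] by (simp add: lorentz_ball_def)
  have "op_norm (lorentz_ball p q) id = 1"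
    using in_unit_ball unit_vectors by (intro op_norm_eq_1) auto
  moreover have "ball_mnc (lorentz_ball p q) id = 1"
    using ball_mnc_le[of 1 "lorentz_ball p q" id] in_unit_ball one_le_ball_mnc[OF unit_vectors]
    by (auto intro: antisym)
  ultimately show ?thesis using space by simp
qed

end
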